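(* Let $K$ be a field of any characteristic. Let $d_1,\ldots,d_n$ be positive integers and let $a_{i,j}$ ($1\le i\le r$, $1\le j\le n$) be positive integers, where $r\ge 3$. Let $A$ be the set of columns of the $n\times(n+r)$ matrix $$\begin{pmatrix} d_1 & 0 & \cdots & 0 & a_{1,1} & \cdots & a_{r,1}\\ 0 & d_2 & \cdots & 0 & a_{1,2} & \cdots & a_{r,2}\\ \vdots & & \ddots & & \vdots & & \vdots\\ 0 & 0 & \cdots & d_n & a_{1,n} & \cdots & a_{r,n}\end{pmatrix},$$ and let $I_A\subset K[x_1,\ldots,x_{n+r}]$ be the corresponding toric ideal (of height $r$). Then $I_A$ is radical splittable.
   Context: For a configuration $A=\{{\bf a}_1,\ldots,{\bf a}_N\}\subset\mathbb{Z}^n$ with $\ker_{\mathbb{Z}}(A)\cap\mathbb{N}^N=\{{\bf 0}\}$, the toric ideal $I_A$ is the kernel of $K[x_1,\ldots,x_N]\to K[t_1^{\pm1},\ldots,t_n^{\pm1}]$, $x_i\mapsto{\bf t}^{{\bf a}_i}$. (In the paper's terminology, $V(I_A)$ is a simplicial toric variety with full parametrization: all $a_{i,j}$ are nonnegative and nonzero.) $I_A$ is radical splittable if there exist toric ideals $I_{A_1},I_{A_2}\subset K[x_1,\ldots,x_{n+r}]$ with $I_A=\mathrm{rad}(I_{A_1}+I_{A_2})$ and $I_{A_i}\ne I_A$ for $i=1,2$. *)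

theory Defs
  imports Main "HOL-Library.Poly_Mapping"
begin

text \<open>Laurent polynomials in t_0, t_1, ...
  are the group algebra (nat =>0 int) =>0 'a.  A configuration of N vectors in Z^n is a
  map cfg :: nat => (nat =>0 int); only cfg 0, ..., cfg (N-1) are used.\<close>

type_synonym 'a mpoly = "(nat \<Rightarrow>\<^sub>0 nat) \<Rightarrow>\<^sub>0 'a"
type_synonym 'a lpoly = "(nat \<Rightarrow>\<^sub>0 int) \<Rightarrow>\<^sub>0 'a"

definition poly_ring :: "'a itself \<Rightarrow> nat \<Rightarrow> ('a::field) mpoly set" where
  "poly_ring _ N = {f. \<forall>u\<in>Poly_Mapping.keys f. Poly_Mapping.keys u \<subseteq> {..<N}}"

definition cfg_exp :: "(nat \<Rightarrow> (nat \<Rightarrow>\<^sub>0 int)) \<Rightarrow> (nat \<Rightarrow>\<^sub>0 nat) \<Rightarrow> (nat \<Rightarrow>\<^sub>0 int)" where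
  "cfg_exp A u = (\<Sum>i\<in>Poly_Mapping.keys u. Poly_Mapping.map (\<lambda>z. int (Poly_Mapping.lookup u i) * z) (A i))"

definition toric_map :: "(nat \<Rightarrow> (nat \<Rightarrow>\<^sub>0 int)) \<Rightarrow> ('a::field) mpoly \<Rightarrow> 'a lpoly" where
  "toric_map A f = (\<Sum>u\<in>Poly_Mapping.keys f. Poly_Mapping.single (cfg_exp A u) (Poly_Mapping.lookup f u))"

definition pointed_config :: "nat \<Rightarrow> (nat \<Rightarrow> (nat \<Rightarrow>\<^sub>0 int)) \<Rightarrow> bool" where
  "pointed_config N A \<longleftrightarrow> (\<forall>u. Poly_Mapping.keys u \<subseteq> {..<N} \<longrightarrow> cfg_exp A u = 0 \<longrightarrow> u = 0)"

definition toric_ideal :: "'a itself \<Rightarrow> nat \<Rightarrow> (nat \<Rightarrow> (nat \<Rightarrow>\<^sub>0 int)) \<Rightarrow> ('a::field) mpoly set" where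
  "toric_ideal T N A = {f \<in> poly_ring T N. toric_map A f = 0}"

definition ideal_sum :: "('a::field) mpoly set \<Rightarrow> 'a mpoly set \<Rightarrow> 'a mpoly set" where
  "ideal_sum I J = {f + g | f g. f \<in> I \<and> g \<in> J}"

definition rad :: "'a itself \<Rightarrow> nat \<Rightarrow> ('a::field) mpoly set \<Rightarrow> 'a mpoly set" where
  "rad T N I = {f \<in> poly_ring T N. \<exists>k. f ^ k \<in> I}"

definition radical_splittable :: "('a::field) itself \<Rightarrow> nat \<Rightarrow> (nat \<Rightarrow> (nat \<Rightarrow>\<^sub>0 int)) \<Rightarrow> bool" where
  "radical_splittable T N A \<longleftrightarrow>
     (\<exists>A1 A2. pointed_config N A1 \<and> pointed_config N A2 \<and>
        toric_ideal T N A = rad T N (ideal_sum (toric_ideal T N A1) (toric_ideal T N A2)) \<and>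
        toric_ideal T N A1 \<noteq> toric_ideal T N A \<and> toric_ideal T N A2 \<noteq> toric_ideal T N A)"

text \<open>Columns of the n x (n+r) matrix: column k < n is d_k e_k, column n+i (i < r)
  is (a_{i,0}, ..., a_{i,n-1}).  Indices are 0-based.\<close>
definition simplicial_config :: "nat \<Rightarrow> nat \<Rightarrow> (nat \<Rightarrow> nat) \<Rightarrow> (nat \<Rightarrow> nat \<Rightarrow> nat) \<Rightarrow> nat \<Rightarrow> (nat \<Rightarrow>\<^sub>0 int)" where
  "simplicial_config n r d a k =
     (if k < n then Poly_Mapping.single k (int (d k))
      else if k < n + r then (\<Sum>j<n. Poly_Mapping.single j (int (a (k - n) j)))
      else 0)"

end

theory Submission
  imports Defs
begin

text \<open>Write \<open>x\<^sub>j\<close> (\<open>j < n\<close>) and \<open>y\<^sub>i\<close> (\<open>i < r\<close>) for the variables,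
  \<open>D = d\<^sub>0 \<cdots> d\<^bsub>n-1\<^esub>\<close>, \<open>m = x\<^sub>0 \<cdots> x\<^bsub>n-1\<^esub>\<close>, and \<open>c\<^sub>i\<close> for the exponent with
  \<open>y\<^sub>i\<^sup>D - x\<^bsup>c\<^sub>i\<^esup> \<in> I\<^sub>A\<close>. Both \<open>A\<^sub>1\<close> and \<open>A\<^sub>2\<close> are \<open>A\<close> with one extra row: the exponent of
  \<open>y\<^bsub>r-1\<^esub>\<close>, resp. a nonzero linear form in the exponents of \<open>y\<^sub>0, y\<^sub>1\<close> that vanishes on a
  pair \<open>(wp, wm)\<close> with \<open>A wp = A wm\<close> whose \<open>y\<^bsub>r-1\<^esub>\<close>-exponents differ by the least possible
  positive amount \<open>g\<close>. Then \<open>I\<^bsub>A\<^sub>1\<^esub>, I\<^bsub>A\<^sub>2\<^esub> \<subseteq> I\<^sub>A\<close>, which is radical, and as \<open>r \<ge> 3\<close>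
  every \<open>y\<^sub>i\<^sup>D - x\<^bsup>c\<^sub>i\<^esup>\<close> is invisible to one of the two extra rows, so
  \<open>J = I\<^bsub>A\<^sub>1\<^esub> + I\<^bsub>A\<^sub>2\<^esub>\<close> contains all of them.

  As \<open>I\<^sub>A\<close> is spanned by binomials, it remains to put \<open>x\<^sup>u - x\<^sup>v\<close> with \<open>A u = A v\<close> into
  \<open>rad J\<close>. First, \<open>x\<^sup>u - x\<^sup>v \<in> J : m\<^sup>\<infinity>\<close>: this relation on exponents is a congruence that
  admits cancellation (an \<open>x\<close>-monomial divides a power of \<open>m\<close>, and \<open>y\<^sub>i\<^sup>D \<equiv> x\<^bsup>c\<^sub>i\<^esup>\<close>), it
  holds for pairs without \<open>y\<^bsub>r-1\<^esub>\<close>-shift (via \<open>A\<^sub>1\<close>) and for \<open>(wp, wm)\<close> (via \<open>A\<^sub>2\<close>), and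
  division with remainder by \<open>g\<close> reduces the general case to these. Second, if \<open>u \<noteq> v\<close> then
  \<open>x\<^sup>u\<close> and \<open>x\<^sup>v\<close> are nilpotent modulo \<open>J + (m)\<close>: a monomial containing some \<open>y\<^sub>i\<close> because
  \<open>y\<^sub>i\<^sup>D \<equiv> x\<^bsup>c\<^sub>i\<^esup>\<close> and all entries of \<open>c\<^sub>i\<close> are positive, a \<open>y\<close>-free one because it has the
  same image as a monomial containing some \<open>y\<^sub>i\<close> and is therefore divisible by \<open>m\<close>. Together
  these give \<open>x\<^sup>u - x\<^sup>v \<in> rad J\<close>.\<close>

abbreviation lookup :: "('b \<Rightarrow>\<^sub>0 'c::zero) \<Rightarrow> 'b \<Rightarrow> 'c" where
  "lookup \<equiv> Poly_Mapping.lookup"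

abbreviation keys :: "('b \<Rightarrow>\<^sub>0 'c::zero) \<Rightarrow> 'b set" where
  "keys \<equiv> Poly_Mapping.keys"

abbreviation single :: "'b \<Rightarrow> 'c::zero \<Rightarrow> 'b \<Rightarrow>\<^sub>0 'c" where
  "single \<equiv> Poly_Mapping.single"

abbreviation monom :: "(nat \<Rightarrow>\<^sub>0 nat) \<Rightarrow> 'a::field mpoly" where
  "monom u \<equiv> single u 1"

lemma monom_add: "monom (u + v) = monom u * monom v"
  by (simp add: mult_single)

lemma monom_mult_binomial: "monom c * (monom p - monom q) = monom (c + p) - monom (c + q)"
  by (simp add: right_diff_distrib mult_single)

lemma sum_single_lookup: "(\<Sum>u\<in>keys f. single u (lookup f u)) = f"
  by (rule poly_mapping_eqI) (simp add: lookup_sum lookup_single when_def in_keys_iff)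

lemma sum_lessThan_add:
  fixes f :: "nat \<Rightarrow> 'b::comm_monoid_add"
  shows "(\<Sum>i<m + k. f i) = (\<Sum>i<m. f i) + (\<Sum>i<k. f (m + i))"
  by (induction k) (simp_all add: add_ac)

subsection \<open>The toric map is a ring homomorphism\<close>

lemma lookup_cfg_exp:
  assumes "finite S" "keys u \<subseteq> S"
  shows "lookup (cfg_exp A u) j = (\<Sum>i\<in>S. int (lookup u i) * lookup (A i) j)"
proof -
  have "lookup (cfg_exp A u) j = (\<Sum>i\<in>keys u. int (lookup u i) * lookup (A i) j)"
    unfolding cfg_exp_def lookup_sum by (auto simp: map.rep_eq when_def intro!: sum.cong)
  also have "\<dots> = (\<Sum>i\<in>S. int (lookup u i) * lookup (A i) j)"
    by (rule sum.mono_neutral_left) (use assms in \<open>auto simp: in_keys_iff\<close>)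
  finally show ?thesis .
qed

lemma cfg_exp_zero [simp]: "cfg_exp A 0 = 0"
  by (simp add: cfg_exp_def)

lemma cfg_exp_add: "cfg_exp A (u + v) = cfg_exp A u + cfg_exp A v"
proof (rule poly_mapping_eqI)
  fix j
  let ?S = "keys u \<union> keys v"
  have "keys (u + v) \<subseteq> ?S" by (rule keys_add)
  then show "lookup (cfg_exp A (u + v)) j = lookup (cfg_exp A u + cfg_exp A v) j"
    by (simp add: lookup_cfg_exp[of ?S] lookup_add sum.distrib algebra_simps)
qed

lemma toric_map_eq_sum:
  assumes "finite S" "keys f \<subseteq> S"
  shows "toric_map A f = (\<Sum>u\<in>S. single (cfg_exp A u) (lookup f u))"
  unfolding toric_map_def
  by (rule sum.mono_neutral_left) (use assms in \<open>auto simp: in_keys_iff\<close>)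

lemma lookup_toric_map:
  "lookup (toric_map A f) e = (\<Sum>u\<in>keys f. (lookup f u when cfg_exp A u = e))"
  unfolding toric_map_def lookup_sum by (simp add: lookup_single)

lemma toric_map_zero [simp]: "toric_map A 0 = 0"
  by (simp add: toric_map_def)

lemma toric_map_single: "toric_map A (single u c) = single (cfg_exp A u) c"
  by (subst toric_map_eq_sum[of "{u}"]) auto

lemma toric_map_add: "toric_map A (f + g) = toric_map A f + toric_map A g"
proof -
  let ?S = "keys f \<union> keys g"
  have "keys (f + g) \<subseteq> ?S" by (rule keys_add)
  then show ?thesis
    by (simp add: toric_map_eq_sum[of ?S] lookup_add single_add sum.distrib)
qed

lemma toric_map_diff: "toric_map A (f - g) = toric_map A f - toric_map A g"
  by (metis toric_map_add diff_add_cancel add_diff_cancel)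

lemma toric_map_sum: "toric_map A (sum F S) = (\<Sum>x\<in>S. toric_map A (F x))"
  by (induction S rule: infinite_finite_induct) (auto simp: toric_map_add toric_map_single)

lemma toric_map_mult: "toric_map A (f * g) = toric_map A f * toric_map A g"
proof -
  let ?F = "keys f" and ?G = "keys g"
  have "toric_map A (f * g) = toric_map A
      ((\<Sum>u\<in>?F. single u (lookup f u)) * (\<Sum>v\<in>?G. single v (lookup g v)))"
    by (simp only: sum_single_lookup)
  also have "\<dots> = (\<Sum>u\<in>?F. \<Sum>v\<in>?G. single (cfg_exp A u + cfg_exp A v) (lookup f u * lookup g v))"
    by (simp add: sum_product mult_single toric_map_sum toric_map_single cfg_exp_add)
  also have "\<dots> = toric_map A f * toric_map A g"
    by (simp add: toric_map_def sum_product mult_single)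
  finally show ?thesis .
qed

lemma toric_map_power: "toric_map A (f ^ k) = toric_map A f ^ k"
  by (induction k) (auto simp: toric_map_mult toric_map_single simp flip: single_one)

subsection \<open>Ideals of a subring\<close>

definition subring :: "'r::comm_ring_1 set \<Rightarrow> bool" where
  "subring S \<longleftrightarrow> 1 \<in> S \<and> (\<forall>a\<in>S. \<forall>b\<in>S. a + b \<in> S \<and> a * b \<in> S \<and> - a \<in> S)"

definition ideal_in :: "'r::comm_ring_1 set \<Rightarrow> 'r set \<Rightarrow> bool" where
  "ideal_in S I \<longleftrightarrow> 0 \<in> I \<and> I \<subseteq> S \<and> (\<forall>a\<in>I. \<forall>b\<in>I. a + b \<in> I) \<and> (\<forall>a\<in>I. \<forall>s\<in>S. s * a \<in> I)"

definition radical_in :: "'r::comm_ring_1 set \<Rightarrow> 'r set \<Rightarrow> 'r set" where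
  "radical_in S I = {f \<in> S. \<exists>k. f ^ k \<in> I}"

definition ideal_plus_principal :: "'r::comm_ring_1 set \<Rightarrow> 'r set \<Rightarrow> 'r \<Rightarrow> 'r set" where
  "ideal_plus_principal S I m = {i + m * h | i h. i \<in> I \<and> h \<in> S}"

lemma subring_add: "subring S \<Longrightarrow> a \<in> S \<Longrightarrow> b \<in> S \<Longrightarrow> a + b \<in> S"
  and subring_mult: "subring S \<Longrightarrow> a \<in> S \<Longrightarrow> b \<in> S \<Longrightarrow> a * b \<in> S"
  and subring_uminus: "subring S \<Longrightarrow> a \<in> S \<Longrightarrow> - a \<in> S"
  and subring_one: "subring S \<Longrightarrow> 1 \<in> S"
  unfolding subring_def by blast+

lemma subring_zero: "subring S \<Longrightarrow> 0 \<in> S"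
  by (metis add.right_inverse subring_add subring_one subring_uminus)

lemma subring_diff: "subring S \<Longrightarrow> a \<in> S \<Longrightarrow> b \<in> S \<Longrightarrow> a - b \<in> S"
  by (metis diff_conv_add_uminus subring_add subring_uminus)

lemma subring_power: "subring S \<Longrightarrow> a \<in> S \<Longrightarrow> a ^ k \<in> S"
  by (induction k) (auto simp: subring_one subring_mult)

lemma subring_of_nat: "subring S \<Longrightarrow> of_nat k \<in> S"
  by (induction k) (auto simp: subring_zero subring_one subring_add)

lemma subring_sum: "subring S \<Longrightarrow> (\<And>x. x \<in> X \<Longrightarrow> F x \<in> S) \<Longrightarrow> sum F X \<in> S"
  by (induction X rule: infinite_finite_induct) (auto simp: subring_zero subring_add)

lemma ideal_in_zero: "ideal_in S I \<Longrightarrow> 0 \<in> I"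
  and ideal_in_subset: "ideal_in S I \<Longrightarrow> a \<in> I \<Longrightarrow> a \<in> S"
  and ideal_in_add: "ideal_in S I \<Longrightarrow> a \<in> I \<Longrightarrow> b \<in> I \<Longrightarrow> a + b \<in> I"
  and ideal_in_mult_left: "ideal_in S I \<Longrightarrow> a \<in> I \<Longrightarrow> s \<in> S \<Longrightarrow> s * a \<in> I"
  unfolding ideal_in_def by blast+

lemma ideal_in_mult_right: "ideal_in S I \<Longrightarrow> a \<in> I \<Longrightarrow> s \<in> S \<Longrightarrow> a * s \<in> I"
  by (metis ideal_in_mult_left mult.commute)

lemma ideal_in_uminus: "subring S \<Longrightarrow> ideal_in S I \<Longrightarrow> a \<in> I \<Longrightarrow> - a \<in> I"
  using ideal_in_mult_left[of S I a "- 1"] by (simp add: subring_one subring_uminus)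

lemma ideal_in_diff: "subring S \<Longrightarrow> ideal_in S I \<Longrightarrow> a \<in> I \<Longrightarrow> b \<in> I \<Longrightarrow> a - b \<in> I"
  by (metis diff_conv_add_uminus ideal_in_add ideal_in_uminus)

lemma ideal_in_sum: "ideal_in S I \<Longrightarrow> (\<And>x. x \<in> X \<Longrightarrow> F x \<in> I) \<Longrightarrow> sum F X \<in> I"
  by (induction X rule: infinite_finite_induct) (auto intro: ideal_in_zero ideal_in_add)

lemma ideal_plus_principal_iff:
  "x \<in> ideal_plus_principal S I m \<longleftrightarrow> (\<exists>i h. x = i + m * h \<and> i \<in> I \<and> h \<in> S)"
  unfolding ideal_plus_principal_def by blast

lemma ideal_in_ideal_plus_principal:
  assumes S: "subring S" and I: "ideal_in S I" and m: "m \<in> S"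
  shows "ideal_in S (ideal_plus_principal S I m)" (is "ideal_in S ?J")
  unfolding ideal_in_def
proof (intro conjI ballI subsetI)
  show "0 \<in> ?J"
    unfolding ideal_plus_principal_iff using ideal_in_zero[OF I] subring_zero[OF S] by force
next
  fix x assume "x \<in> ?J"
  then obtain i h where "x = i + m * h" "i \<in> I" "h \<in> S"
    unfolding ideal_plus_principal_iff by blast
  then show "x \<in> S"
    using ideal_in_subset[OF I] subring_add[OF S] subring_mult[OF S m] by simp
next
  fix x y assume "x \<in> ?J" "y \<in> ?J"
  then obtain i h i' h' where xy: "x = i + m * h" "y = i' + m * h'"
    and mem: "i \<in> I" "h \<in> S" "i' \<in> I" "h' \<in> S"
    unfolding ideal_plus_principal_iff by blast
  have "x + y = (i + i') + m * (h + h')"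
    using xy by (simp add: algebra_simps)
  with mem show "x + y \<in> ?J"
    unfolding ideal_plus_principal_iff using ideal_in_add[OF I] subring_add[OF S] by blast
next
  fix x s assume "x \<in> ?J" and s: "s \<in> S"
  then obtain i h where x: "x = i + m * h" and mem: "i \<in> I" "h \<in> S"
    unfolding ideal_plus_principal_iff by blast
  have "s * x = s * i + m * (s * h)"
    using x by (simp add: algebra_simps)
  with mem s show "s * x \<in> ?J"
    unfolding ideal_plus_principal_iff using ideal_in_mult_left[OF I] subring_mult[OF S] by blast
qed

lemma ideal_in_ideal_sum:
  assumes S: "subring S" and I: "ideal_in S I" and J: "ideal_in S J"
  shows "ideal_in S (ideal_sum I J)"
  unfolding ideal_in_def
proof (intro conjI ballI subsetI)
  show "0 \<in> ideal_sum I J"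
    unfolding ideal_sum_def using ideal_in_zero[OF I] ideal_in_zero[OF J] by force
next
  fix x assume "x \<in> ideal_sum I J"
  then show "x \<in> S"
    unfolding ideal_sum_def using ideal_in_subset[OF I] ideal_in_subset[OF J] subring_add[OF S] by blast
next
  fix x y assume "x \<in> ideal_sum I J" "y \<in> ideal_sum I J"
  then obtain f g f' g' where "x = f + g" "y = f' + g'" "f \<in> I" "g \<in> J" "f' \<in> I" "g' \<in> J"
    unfolding ideal_sum_def by blast
  then have "x + y = (f + f') + (g + g')" "f + f' \<in> I" "g + g' \<in> J"
    using ideal_in_add[OF I] ideal_in_add[OF J] by (simp_all add: algebra_simps)
  then show "x + y \<in> ideal_sum I J"
    unfolding ideal_sum_def by blast
next
  fix x s assume "x \<in> ideal_sum I J" "s \<in> S"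
  then obtain f g where "x = f + g" "f \<in> I" "g \<in> J"
    unfolding ideal_sum_def by blast
  then show "s * x \<in> ideal_sum I J"
    unfolding ideal_sum_def using ideal_in_mult_left[OF I _ \<open>s \<in> S\<close>] ideal_in_mult_left[OF J _ \<open>s \<in> S\<close>]
    by (auto simp: distrib_left)
qed

lemma ideal_sum_subset:
  "ideal_in S K \<Longrightarrow> I \<subseteq> K \<Longrightarrow> J \<subseteq> K \<Longrightarrow> ideal_sum I J \<subseteq> K"
  unfolding ideal_sum_def by (auto intro: ideal_in_add)

lemma subset_ideal_sum_left: "ideal_in S J \<Longrightarrow> I \<subseteq> ideal_sum I J"
  unfolding ideal_sum_def by (force dest: ideal_in_zero)

lemma subset_ideal_sum_right: "ideal_in S I \<Longrightarrow> J \<subseteq> ideal_sum I J"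
  unfolding ideal_sum_def by (force dest: ideal_in_zero)

lemma add_power_in_ideal:
  assumes S: "subring S" and I: "ideal_in S I" and a: "a \<in> S" and b: "b \<in> S"
    and ai: "a ^ i \<in> I" and bj: "b ^ j \<in> I"
  shows "(a + b) ^ (i + j) \<in> I"
proof -
  have "of_nat ((i + j) choose k) * (a ^ k * b ^ (i + j - k)) \<in> I" for k
  proof -
    have "a ^ k * b ^ (i + j - k) \<in> I"
    proof (cases "i \<le> k")
      case True
      then have "a ^ k = a ^ i * a ^ (k - i)"
        by (simp flip: power_add)
      then have "a ^ k * b ^ (i + j - k) = a ^ i * (a ^ (k - i) * b ^ (i + j - k))"
        by (simp add: mult.assoc)
      then show ?thesis
        using ideal_in_mult_right[OF I ai] S a b by (simp add: subring_mult subring_power)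
    next
      case False
      then have "i + j - k = j + (i - k)"
        by simp
      then have "b ^ (i + j - k) = b ^ j * b ^ (i - k)"
        by (simp only: power_add)
      then have "a ^ k * b ^ (i + j - k) = b ^ j * (a ^ k * b ^ (i - k))"
        by (simp add: ac_simps)
      then show ?thesis
        using ideal_in_mult_right[OF I bj] S a b by (simp add: subring_mult subring_power)
    qed
    then show ?thesis
      using ideal_in_mult_left[OF I] subring_of_nat[OF S] by blast
  qed
  then show ?thesis
    by (simp add: binomial_ring ideal_in_sum[OF I] mult.assoc)
qed

lemma ideal_in_radical_in:
  assumes S: "subring S" and I: "ideal_in S I"
  shows "ideal_in S (radical_in S I)"
  unfolding ideal_in_def
proof (intro conjI ballI subsetI)
  show "0 \<in> radical_in S I"
    unfolding radical_in_def using ideal_in_zero[OF I] subring_zero[OF S]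
    by (intro CollectI conjI exI[of _ 1]) auto
next
  fix a b assume "a \<in> radical_in S I" "b \<in> radical_in S I"
  then obtain i j where "a \<in> S" "a ^ i \<in> I" "b \<in> S" "b ^ j \<in> I"
    unfolding radical_in_def by blast
  then show "a + b \<in> radical_in S I"
    unfolding radical_in_def using add_power_in_ideal[OF S I] subring_add[OF S] by blast
next
  fix a s assume "a \<in> radical_in S I" and s: "s \<in> S"
  then obtain i where "a \<in> S" "a ^ i \<in> I"
    unfolding radical_in_def by blast
  moreover from this have "(s * a) ^ i \<in> I"
    unfolding power_mult_distrib by (intro ideal_in_mult_left[OF I] subring_power[OF S s])
  ultimately show "s * a \<in> radical_in S I"
    unfolding radical_in_def using subring_mult[OF S s] by blast
qed (auto simp: radical_in_def)

text \<open>Writing \<open>g\<^sup>k = i + m h\<close>, we have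
  \<open>g\<^bsup>ks+1\<^esup> = g ((g\<^sup>k)\<^sup>s - (m h)\<^sup>s) + (m\<^sup>s g) h\<^sup>s\<close>, and \<open>g\<^sup>k - m h\<close> divides the first term.\<close>

lemma radical_in_if_saturated:
  assumes S: "subring S" and I: "ideal_in S I" and m: "m \<in> S"
    and g: "g \<in> radical_in S (ideal_plus_principal S I m)" and gs: "m ^ s * g \<in> I"
  shows "g \<in> radical_in S I"
proof -
  obtain k i h where gS: "g \<in> S" and gk: "g ^ k = i + m * h" and i: "i \<in> I" and h: "h \<in> S"
    using g unfolding radical_in_def ideal_plus_principal_iff by blast
  have "(g ^ k) ^ s - (m * h) ^ s = i * (\<Sum>j<s. (m * h) ^ (s - Suc j) * (g ^ k) ^ j)"
    by (simp add: gk power_diff_sumr2)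
  moreover have "(\<Sum>j<s. (m * h) ^ (s - Suc j) * (g ^ k) ^ j) \<in> S"
    using S m h gS by (intro subring_sum subring_mult subring_power)
  ultimately have "g * ((g ^ k) ^ s - (m * h) ^ s) \<in> I"
    using ideal_in_mult_left[OF I ideal_in_mult_right[OF I i] gS] by simp
  moreover have "g * (m * h) ^ s = (m ^ s * g) * h ^ s"
    by (simp add: power_mult_distrib ac_simps)
  then have "g * (m * h) ^ s \<in> I"
    using ideal_in_mult_right[OF I gs subring_power[OF S h]] by simp
  moreover have "g ^ (k * s + 1) = g * ((g ^ k) ^ s - (m * h) ^ s) + g * (m * h) ^ s"
    by (simp add: power_mult algebra_simps)
  ultimately have "g ^ (k * s + 1) \<in> I"
    using ideal_in_add[OF I] by simp
  with gS show ?thesis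
    unfolding radical_in_def by blast
qed

subsection \<open>Toric ideals are radical and generated by binomials\<close>

definition exponents :: "nat \<Rightarrow> (nat \<Rightarrow>\<^sub>0 nat) set" where
  "exponents N = {u. keys u \<subseteq> {..<N}}"

lemma exponentsI: "(\<And>k. N \<le> k \<Longrightarrow> lookup u k = 0) \<Longrightarrow> u \<in> exponents N"
  unfolding exponents_def by (auto simp: in_keys_iff not_less[symmetric])

lemma exponentsD: "u \<in> exponents N \<Longrightarrow> N \<le> k \<Longrightarrow> lookup u k = 0"
  unfolding exponents_def by (auto simp: in_keys_iff)

lemma exponents_add: "u \<in> exponents N \<Longrightarrow> v \<in> exponents N \<Longrightarrow> u + v \<in> exponents N"
  unfolding exponents_def using keys_add[of u v] by auto

lemma single_in_exponents: "k < N \<Longrightarrow> single k b \<in> exponents N"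
  by (rule exponentsI) (simp add: lookup_single when_def)

lemma exponents_eqI:
  assumes "u \<in> exponents N" "v \<in> exponents N" "\<And>k. k < N \<Longrightarrow> lookup u k = lookup v k"
  shows "u = v"
  by (rule poly_mapping_eqI) (metis assms exponentsD not_less)

definition scale_exp :: "nat \<Rightarrow> (nat \<Rightarrow>\<^sub>0 nat) \<Rightarrow> (nat \<Rightarrow>\<^sub>0 nat)" where
  "scale_exp t u = Poly_Mapping.map (\<lambda>x. t * x) u"

lemma lookup_scale_exp: "lookup (scale_exp t u) k = t * lookup u k"
  by (simp add: scale_exp_def map.rep_eq when_def)

lemma scale_exp_0 [simp]: "scale_exp 0 u = 0"
  by (rule poly_mapping_eqI) (simp add: lookup_scale_exp)

lemma scale_exp_Suc: "scale_exp (Suc t) u = scale_exp t u + u"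
  by (rule poly_mapping_eqI) (simp add: lookup_scale_exp lookup_add)

lemma scale_exp_add: "scale_exp t (u + v) = scale_exp t u + scale_exp t v"
  by (rule poly_mapping_eqI) (simp add: lookup_scale_exp lookup_add algebra_simps)

lemma scale_exp_single: "scale_exp t (single k b) = single k (t * b)"
  by (rule poly_mapping_eqI) (simp add: lookup_scale_exp lookup_single when_def)

lemma monom_power: "monom u ^ t = monom (scale_exp t u)"
  by (induction t) (simp_all add: scale_exp_Suc monom_add mult.commute flip: single_one)

lemma scale_exp_in_exponents: "u \<in> exponents N \<Longrightarrow> scale_exp t u \<in> exponents N"
  by (rule exponentsI) (simp add: lookup_scale_exp exponentsD)

lemma cfg_exp_scale_exp_eq:
  "cfg_exp A u = cfg_exp A v \<Longrightarrow> cfg_exp A (scale_exp t u) = cfg_exp A (scale_exp t v)"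
  by (induction t) (simp_all add: scale_exp_Suc cfg_exp_add)

lemma monom_in_poly_ring: "u \<in> exponents N \<Longrightarrow> (monom u :: 'a::field mpoly) \<in> poly_ring T N"
  unfolding exponents_def poly_ring_def by auto

lemma subring_poly_ring: "subring (poly_ring T N :: 'a::field mpoly set)"
  unfolding subring_def
proof (intro conjI ballI)
  show "1 \<in> poly_ring T N"
    by (simp add: poly_ring_def flip: single_one)
next
  fix f g :: "'a mpoly" assume f: "f \<in> poly_ring T N" and g: "g \<in> poly_ring T N"
  then show "f + g \<in> poly_ring T N" "- f \<in> poly_ring T N"
    using keys_add[of f g] by (auto simp: poly_ring_def)
  show "f * g \<in> poly_ring T N"
    unfolding poly_ring_def
  proof (intro CollectI ballI)
    fix w assume "w \<in> keys (f * g)"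
    then obtain u v where "w = u + v" "u \<in> keys f" "v \<in> keys g"
      using keys_mult[of f g] by blast
    with f g show "keys w \<subseteq> {..<N}"
      using keys_add[of u v] unfolding poly_ring_def by blast
  qed
qed

lemma binomial_in_poly_ring:
  "u \<in> exponents N \<Longrightarrow> v \<in> exponents N \<Longrightarrow> (monom u - monom v :: 'a::field mpoly) \<in> poly_ring T N"
  by (intro subring_diff[OF subring_poly_ring] monom_in_poly_ring)

lemma ideal_in_toric_ideal: "ideal_in (poly_ring T N) (toric_ideal T N A :: 'a::field mpoly set)"
  using subring_poly_ring[of T N]
  by (auto simp: ideal_in_def toric_ideal_def toric_map_add toric_map_mult subring_def subring_zero)

lemma toric_ideal_radical:
  assumes "f \<in> poly_ring T N" "f ^ k \<in> toric_ideal T N A"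
  shows "(f :: 'a::field mpoly) \<in> toric_ideal T N A"
proof -
  have "toric_map A f ^ k = 0"
    using assms by (simp add: toric_ideal_def toric_map_power)
  moreover have "k \<noteq> 0"
  proof
    assume "k = 0"
    then have "toric_map A (1 :: 'a mpoly) = 0"
      using assms by (simp add: toric_ideal_def)
    then show False
      by (metis single_one toric_map_single cfg_exp_zero one_neq_zero)
  qed
  ultimately show ?thesis
    using assms by (simp add: toric_ideal_def)
qed

lemma binomial_in_toric_ideal_iff:
  assumes "u \<in> exponents N" "v \<in> exponents N"
  shows "(monom u - monom v :: 'a::field mpoly) \<in> toric_ideal T N A \<longleftrightarrow> cfg_exp A u = cfg_exp A v"
proof -
  have "toric_map A (monom u - monom v :: 'a mpoly) = single (cfg_exp A u) 1 - single (cfg_exp A v) 1"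
    by (simp add: toric_map_diff toric_map_single)
  moreover have "single (cfg_exp A u) (1::'a) \<noteq> single (cfg_exp A v) 1" if "cfg_exp A u \<noteq> cfg_exp A v"
    using that by (metis lookup_single_eq lookup_single_not_eq one_neq_zero)
  ultimately show ?thesis
    using binomial_in_poly_ring[OF assms] by (auto simp: toric_ideal_def)
qed

lemma toric_kernel_partner:
  assumes "toric_map A f = 0" "u \<in> keys f"
  obtains u' where "u' \<in> keys f" "u' \<noteq> u" "cfg_exp A u' = cfg_exp A u"
proof -
  have "\<exists>u'. u' \<in> keys f \<and> u' \<noteq> u \<and> cfg_exp A u' = cfg_exp A u"
  proof (rule ccontr)
    assume "\<nexists>u'. u' \<in> keys f \<and> u' \<noteq> u \<and> cfg_exp A u' = cfg_exp A u"
    then have "lookup (toric_map A f) (cfg_exp A u) = lookup f u"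
      unfolding lookup_toric_map using assms(2)
      by (subst sum.remove[OF finite_keys assms(2)]) (auto simp: when_def intro!: sum.neutral)
    with assms show False
      by (simp add: in_keys_iff)
  qed
  with that show ?thesis
    by blast
qed

lemma card_keys_diff_binomial:
  assumes "u \<in> keys f" "u' \<in> keys f" "u' \<noteq> u"
  shows "card (keys (f - single 0 (lookup f u) * (monom u - monom u'))) < card (keys (f :: 'a::field mpoly))"
proof -
  have "single 0 (lookup f u) * (monom u - monom u' :: 'a mpoly) = single u (lookup f u) - single u' (lookup f u)"
    by (simp add: right_diff_distrib mult_single)
  then have "keys (f - single 0 (lookup f u) * (monom u - monom u')) \<subseteq> keys f - {u}"
    using assms by (auto simp: in_keys_iff lookup_minus lookup_single when_def split: if_splits)
  then show ?thesis
    using assms(1) by (meson card_mono card_Diff1_less finite_Diff finite_keys le_less_trans)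
qed

text \<open>Induction on the number of terms: along with each exponent \<open>u\<close>, a polynomial in the
  kernel of the toric map has a second exponent \<open>u'\<close> with the same image, and subtracting a
  multiple of \<open>x\<^sup>u - x\<^bsup>u'\<^esup>\<close> removes the term \<open>x\<^sup>u\<close>.\<close>

lemma toric_ideal_subset_if_binomials:
  assumes R: "ideal_in (poly_ring T N) R"
    and bin: "\<And>u v. u \<in> exponents N \<Longrightarrow> v \<in> exponents N \<Longrightarrow> cfg_exp A u = cfg_exp A v \<Longrightarrow>
      (monom u - monom v :: 'a::field mpoly) \<in> R"
  shows "toric_ideal T N A \<subseteq> R"
proof
  fix f :: "'a mpoly" assume "f \<in> toric_ideal T N A"
  then show "f \<in> R"
  proof (induction "card (keys f)" arbitrary: f rule: less_induct)
    case less
    show ?case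
    proof (cases "f = 0")
      case True
      then show ?thesis using ideal_in_zero[OF R] by simp
    next
      case False
      then obtain u where u: "u \<in> keys f" by fastforce
      have f: "f \<in> poly_ring T N" "toric_map A f = 0"
        using less.prems by (simp_all add: toric_ideal_def)
      obtain u' where u': "u' \<in> keys f" "u' \<noteq> u" "cfg_exp A u' = cfg_exp A u"
        using toric_kernel_partner[OF f(2) u] .
      have uN: "u \<in> exponents N" "u' \<in> exponents N"
        using f u u'(1) by (simp_all add: poly_ring_def exponents_def)
      define b where "b = single 0 (lookup f u) * (monom u - monom u' :: 'a mpoly)"
      have c: "single 0 (lookup f u) \<in> poly_ring T N"
        by (simp add: poly_ring_def)
      have "(monom u - monom u' :: 'a mpoly) \<in> toric_ideal T N A"
        using u'(3) by (simp add: binomial_in_toric_ideal_iff[OF uN])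
      then have "f - b \<in> toric_ideal T N A"
        unfolding b_def using less.prems ideal_in_mult_left[OF ideal_in_toric_ideal _ c]
        by (blast intro: ideal_in_diff[OF subring_poly_ring ideal_in_toric_ideal])
      then have "f - b \<in> R"
        using less.hyps card_keys_diff_binomial[OF u u'(1,2)] unfolding b_def by blast
      moreover have "b \<in> R"
        unfolding b_def by (rule ideal_in_mult_left[OF R bin[OF uN u'(3)[symmetric]] c])
      ultimately show ?thesis
        using ideal_in_add[OF R] by fastforce
    qed
  qed
qed

lemma toric_ideal_mono:
  assumes "\<And>u v. u \<in> exponents N \<Longrightarrow> v \<in> exponents N \<Longrightarrow> cfg_exp B u = cfg_exp B v \<Longrightarrow>
      cfg_exp A u = cfg_exp A v"
  shows "toric_ideal T N B \<subseteq> (toric_ideal T N A :: 'a::field mpoly set)"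
proof (rule toric_ideal_subset_if_binomials[OF ideal_in_toric_ideal])
  fix u v assume uv: "u \<in> exponents N" "v \<in> exponents N" and "cfg_exp B u = cfg_exp B v"
  then have "cfg_exp A u = cfg_exp A v"
    by (rule assms)
  then show "(monom u - monom v :: 'a mpoly) \<in> toric_ideal T N A"
    using binomial_in_toric_ideal_iff[OF uv] by blast
qed

subsection \<open>Adding a row to a configuration\<close>

definition with_row :: "(nat \<Rightarrow> (nat \<Rightarrow>\<^sub>0 int)) \<Rightarrow> nat \<Rightarrow> (nat \<Rightarrow> int) \<Rightarrow> nat \<Rightarrow> (nat \<Rightarrow>\<^sub>0 int)" where
  "with_row A m l k = A k + single m (l k)"

definition row_val :: "(nat \<Rightarrow> int) \<Rightarrow> (nat \<Rightarrow>\<^sub>0 nat) \<Rightarrow> int" where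
  "row_val l u = (\<Sum>i\<in>keys u. int (lookup u i) * l i)"

lemma row_val_eq_sum:
  assumes "finite S" "keys u \<subseteq> S"
  shows "row_val l u = (\<Sum>i\<in>S. int (lookup u i) * l i)"
  unfolding row_val_def
  by (rule sum.mono_neutral_left) (use assms in \<open>auto simp: in_keys_iff\<close>)

lemma row_val_plus: "row_val (\<lambda>i. l i + l' i) u = row_val l u + row_val l' u"
  by (simp add: row_val_def algebra_simps sum.distrib)

lemma row_val_point: "row_val (\<lambda>i. if i = k then c else 0) u = c * int (lookup u k)"
proof -
  have "row_val (\<lambda>i. if i = k then c else 0) u
      = (\<Sum>i\<in>insert k (keys u). int (lookup u i) * (if i = k then c else 0))"
    by (rule row_val_eq_sum) auto
  also have "\<dots> = (\<Sum>i\<in>insert k (keys u). if i = k then c * int (lookup u k) else 0)"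
    by (rule sum.cong) auto
  finally show ?thesis
    by simp
qed

definition coord_row :: "nat \<Rightarrow> nat \<Rightarrow> int" where
  "coord_row k j = (if j = k then 1 else 0)"

lemma row_val_coord_row: "row_val (coord_row k) u = int (lookup u k)"
  using row_val_point[of k 1 u] by (simp add: coord_row_def[abs_def])

lemma cfg_exp_with_row: "cfg_exp (with_row A m l) u = cfg_exp A u + single m (row_val l u)"
proof (rule poly_mapping_eqI)
  fix j
  show "lookup (cfg_exp (with_row A m l) u) j = lookup (cfg_exp A u + single m (row_val l u)) j"
    by (simp add: lookup_cfg_exp[of "keys u"] with_row_def lookup_add lookup_single row_val_def
        distrib_left sum.distrib when_def)
qed

lemma cfg_exp_with_row_eq_iff:
  assumes "\<And>k. lookup (A k) m = 0"
  shows "cfg_exp (with_row A m l) u = cfg_exp (with_row A m l) v \<longleftrightarrow>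
    cfg_exp A u = cfg_exp A v \<and> row_val l u = row_val l v"
proof
  assume eq: "cfg_exp (with_row A m l) u = cfg_exp (with_row A m l) v"
  have "lookup (cfg_exp A w) m = 0" for w
    by (simp add: lookup_cfg_exp[of "keys w"] assms)
  then have "row_val l u = row_val l v"
    using arg_cong[OF eq, of "\<lambda>p. lookup p m"] by (simp add: cfg_exp_with_row lookup_add)
  with eq show "cfg_exp A u = cfg_exp A v \<and> row_val l u = row_val l v"
    by (simp add: cfg_exp_with_row)
qed (simp add: cfg_exp_with_row)

lemma pointed_config_with_row:
  assumes "pointed_config N A" "\<And>k. lookup (A k) m = 0"
  shows "pointed_config N (with_row A m l)"
  unfolding pointed_config_def
proof (intro allI impI)
  fix u assume u: "keys u \<subseteq> {..<N}" and "cfg_exp (with_row A m l) u = 0"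
  then have "cfg_exp A u = 0"
    using cfg_exp_with_row_eq_iff[OF assms(2), where u=u and v=0] by simp
  with u assms(1) show "u = 0"
    unfolding pointed_config_def by blast
qed

lemma toric_ideal_with_row_subset:
  assumes "\<And>k. lookup (A k) m = 0"
  shows "toric_ideal T N (with_row A m l) \<subseteq> (toric_ideal T N A :: 'a::field mpoly set)"
  by (rule toric_ideal_mono) (simp add: cfg_exp_with_row_eq_iff[OF assms])

lemma binomial_in_toric_ideal_with_row:
  assumes "\<And>k. lookup (A k) m = 0" and uv: "u \<in> exponents N" "v \<in> exponents N"
    and "cfg_exp A u = cfg_exp A v" "row_val l u = row_val l v"
  shows "(monom u - monom v :: 'a::field mpoly) \<in> toric_ideal T N (with_row A m l)"
  using assms by (simp add: binomial_in_toric_ideal_iff[OF uv] cfg_exp_with_row_eq_iff)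

lemma toric_ideal_with_row_neq:
  assumes "\<And>k. lookup (A k) m = 0" and uv: "u \<in> exponents N" "v \<in> exponents N"
    and "cfg_exp A u = cfg_exp A v" "row_val l u \<noteq> row_val l v"
  shows "toric_ideal T N (with_row A m l) \<noteq> (toric_ideal T N A :: 'a::field mpoly set)"
proof
  assume eq: "toric_ideal T N (with_row A m l) = (toric_ideal T N A :: 'a mpoly set)"
  have "(monom u - monom v :: 'a mpoly) \<in> toric_ideal T N A"
    using assms by (simp add: binomial_in_toric_ideal_iff[OF uv])
  moreover have "(monom u - monom v :: 'a mpoly) \<notin> toric_ideal T N (with_row A m l)"
    using assms by (simp add: binomial_in_toric_ideal_iff[OF uv] cfg_exp_with_row_eq_iff)
  ultimately show False
    using eq by simp
qed

subsection \<open>The simplicial configuration\<close>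

text \<open>Exponent index \<open>j < n\<close> stands for the variable \<open>x\<^sub>j\<close> (column \<open>d\<^sub>j e\<^sub>j\<close>) and
  index \<open>n + i\<close>, \<open>i < r\<close>, for \<open>y\<^sub>i\<close> (column \<open>a\<^sub>i\<close>).\<close>

locale simplicial =
  fixes n r :: nat and d :: "nat \<Rightarrow> nat" and a :: "nat \<Rightarrow> nat \<Rightarrow> nat"
  assumes d_pos: "\<And>j. j < n \<Longrightarrow> 0 < d j"
    and a_pos: "\<And>i j. i < r \<Longrightarrow> j < n \<Longrightarrow> 0 < a i j"
begin

abbreviation A :: "nat \<Rightarrow> (nat \<Rightarrow>\<^sub>0 int)" where
  "A \<equiv> simplicial_config n r d a"

definition A_coord :: "(nat \<Rightarrow>\<^sub>0 nat) \<Rightarrow> nat \<Rightarrow> int" where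
  "A_coord u j = int (d j) * int (lookup u j) + (\<Sum>i<r. int (a i j) * int (lookup u (n + i)))"

definition y_free :: "(nat \<Rightarrow>\<^sub>0 nat) \<Rightarrow> bool" where
  "y_free u \<longleftrightarrow> (\<forall>i<r. lookup u (n + i) = 0)"

lemma lookup_A:
  "lookup (A k) j = (if k < n then (if k = j then int (d k) else 0)
     else if k < n + r \<and> j < n then int (a (k - n) j) else 0)"
  by (auto simp: simplicial_config_def lookup_single lookup_sum when_def)

lemma lookup_A_ge: "n \<le> j \<Longrightarrow> lookup (A k) j = 0"
  by (simp add: lookup_A)

lemma lookup_cfg_exp_A:
  assumes "u \<in> exponents (n + r)"
  shows "lookup (cfg_exp A u) j = (if j < n then A_coord u j else 0)"
proof -
  have "lookup (cfg_exp A u) j = (\<Sum>k<n + r. int (lookup u k) * lookup (A k) j)"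
    by (rule lookup_cfg_exp) (use assms in \<open>auto simp: exponents_def\<close>)
  also have "\<dots> = (\<Sum>k<n. int (lookup u k) * lookup (A k) j)
      + (\<Sum>i<r. int (lookup u (n + i)) * lookup (A (n + i)) j)"
    by (rule sum_lessThan_add)
  also have "\<dots> = (if j < n then A_coord u j else 0)"
    by (simp add: lookup_A A_coord_def if_distrib[of "\<lambda>x. _ * x"] sum.If_cases mult.commute
        cong: if_cong)
  finally show ?thesis .
qed

lemma cfg_exp_A_eq_iff:
  assumes "u \<in> exponents (n + r)" "v \<in> exponents (n + r)"
  shows "cfg_exp A u = cfg_exp A v \<longleftrightarrow> (\<forall>j<n. A_coord u j = A_coord v j)"
proof
  assume "cfg_exp A u = cfg_exp A v"
  then show "\<forall>j<n. A_coord u j = A_coord v j"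
    using lookup_cfg_exp_A[OF assms(1)] lookup_cfg_exp_A[OF assms(2)] by metis
next
  assume "\<forall>j<n. A_coord u j = A_coord v j"
  then show "cfg_exp A u = cfg_exp A v"
    by (intro poly_mapping_eqI) (simp add: lookup_cfg_exp_A[OF assms(1)] lookup_cfg_exp_A[OF assms(2)])
qed

lemma A_coord_ge_x: "int (d j) * int (lookup u j) \<le> A_coord u j"
proof -
  have "0 \<le> (\<Sum>i<r. int (a i j) * int (lookup u (n + i)))"
    by (rule sum_nonneg) simp
  then show ?thesis
    unfolding A_coord_def by linarith
qed

lemma A_coord_ge_y:
  assumes "i < r"
  shows "int (a i j) * int (lookup u (n + i)) \<le> A_coord u j"
proof -
  have "int (a i j) * int (lookup u (n + i)) \<le> (\<Sum>i<r. int (a i j) * int (lookup u (n + i)))"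
    by (rule member_le_sum) (use assms in auto)
  moreover have "0 \<le> int (d j) * int (lookup u j)"
    by simp
  ultimately show ?thesis
    unfolding A_coord_def by linarith
qed

lemma pointed_config_A:
  assumes "0 < n"
  shows "pointed_config (n + r) A"
  unfolding pointed_config_def
proof (intro allI impI)
  fix u assume "keys u \<subseteq> {..<n + r}" and A0: "cfg_exp A u = 0"
  then have u: "u \<in> exponents (n + r)"
    by (simp add: exponents_def)
  have coord: "A_coord u j = 0" if "j < n" for j
    using lookup_cfg_exp_A[OF u, of j] A0 that by simp
  show "u = 0"
  proof (rule exponents_eqI[OF u])
    fix k assume "k < n + r"
    then consider "k < n" | i where "i < r" "k = n + i"
      by (metis add_diff_inverse_nat add_less_cancel_left)
    then show "lookup u k = lookup 0 k"
    proof cases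
      case 1
      then show ?thesis
        using A_coord_ge_x[of k u] coord[OF 1] d_pos[OF 1] by (simp add: mult_le_0_iff)
    next
      case 2
      then show ?thesis
        using A_coord_ge_y[of i 0 u] coord[OF assms] a_pos[OF 2(1) assms] by (simp add: mult_le_0_iff)
    qed
  qed (simp add: exponents_def)
qed

lemma y_free_eq:
  assumes u: "u \<in> exponents (n + r)" and v: "v \<in> exponents (n + r)"
    and "y_free u" "y_free v" and "cfg_exp A u = cfg_exp A v"
  shows "u = v"
proof (rule exponents_eqI[OF u v])
  fix k assume "k < n + r"
  then consider "k < n" | i where "i < r" "k = n + i"
    by (metis add_diff_inverse_nat add_less_cancel_left)
  then show "lookup u k = lookup v k"
  proof cases
    case 1
    then have "A_coord u k = A_coord v k"
      using assms by (simp add: cfg_exp_A_eq_iff)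
    with 1 \<open>y_free u\<close> \<open>y_free v\<close> show ?thesis
      using d_pos[OF 1] by (simp add: A_coord_def y_free_def)
  next
    case 2
    with \<open>y_free u\<close> \<open>y_free v\<close> show ?thesis
      by (simp add: y_free_def)
  qed
qed

lemma lookup_x_pos_if_y_free:
  assumes u: "u \<in> exponents (n + r)" and v: "v \<in> exponents (n + r)"
    and "y_free u" and i: "i < r" "0 < lookup v (n + i)" and "cfg_exp A u = cfg_exp A v"
    and j: "j < n"
  shows "1 \<le> lookup u j"
proof -
  have "0 < int (a i j) * int (lookup v (n + i))"
    using a_pos[OF i(1) j] i(2) by simp
  also have "\<dots> \<le> A_coord v j"
    by (rule A_coord_ge_y[OF i(1)])
  also have "\<dots> = int (d j) * int (lookup u j)"
    using assms by (simp add: cfg_exp_A_eq_iff A_coord_def y_free_def)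
  finally show ?thesis
    by (simp add: zero_less_mult_iff)
qed

definition D :: nat where
  "D = (\<Prod>j<n. d j)"

text \<open>\<open>c_vec i\<close> is the exponent with \<open>A (c_vec i) = D a\<^sub>i\<close>, so that \<open>y\<^sub>i\<^sup>D - x\<^bsup>c_vec i\<^esup> \<in> I\<^sub>A\<close>;
  it is integral because every \<open>d\<^sub>j\<close> divides \<open>D\<close>.\<close>

definition c_vec :: "nat \<Rightarrow> (nat \<Rightarrow>\<^sub>0 nat)" where
  "c_vec i = (\<Sum>j<n. single j (D * a i j div d j))"

definition x_diag :: "nat \<Rightarrow> (nat \<Rightarrow>\<^sub>0 nat)" where
  "x_diag s = (\<Sum>j<n. single j s)"

lemma D_pos: "0 < D"
  unfolding D_def using d_pos by (simp add: prod_pos)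

lemma d_dvd_D: "j < n \<Longrightarrow> d j dvd D"
  unfolding D_def by (rule dvd_prodI) auto

lemma lookup_c_vec: "lookup (c_vec i) j = (if j < n then D * a i j div d j else 0)"
  unfolding c_vec_def by (auto simp: lookup_sum lookup_single when_def)

lemma lookup_x_diag: "lookup (x_diag s) j = (if j < n then s else 0)"
  unfolding x_diag_def by (auto simp: lookup_sum lookup_single when_def)

lemma c_vec_in_exponents: "c_vec i \<in> exponents (n + r)"
  by (rule exponentsI) (simp add: lookup_c_vec)

lemma x_diag_in_exponents: "x_diag s \<in> exponents (n + r)"
  by (rule exponentsI) (simp add: lookup_x_diag)

lemma x_diag_add: "x_diag (s + t) = x_diag s + x_diag t"
  by (rule poly_mapping_eqI) (simp add: lookup_x_diag lookup_add)

lemma x_diag_0 [simp]: "x_diag 0 = 0"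
  by (rule poly_mapping_eqI) (simp add: lookup_x_diag)

lemma lookup_c_vec_pos:
  assumes "i < r" "j < n"
  shows "1 \<le> lookup (c_vec i) j"
proof -
  have "d j \<le> D * a i j"
    using d_dvd_D[OF assms(2)] D_pos a_pos[OF assms]
    by (metis dvd_imp_le dvd_mult2 mult_pos_pos)
  then show ?thesis
    using d_pos[OF assms(2)] assms(2) by (simp add: lookup_c_vec Suc_le_eq div_greater_zero_iff)
qed

lemma cfg_exp_y_pow:
  assumes i: "i < r"
  shows "cfg_exp A (single (n + i) D) = cfg_exp A (c_vec i)"
proof -
  have "A_coord (single (n + i) D) j = A_coord (c_vec i) j" if j: "j < n" for j
  proof -
    have "(\<Sum>i'<r. int (a i' j) * int (lookup (single (n + i) D) (n + i'))) = int (a i j) * int D"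
      using i by (simp add: lookup_single when_def if_distrib[of "\<lambda>x. _ * int x"] cong: if_cong)
    moreover have "int (d j) * int (D * a i j div d j) = int (a i j) * int D"
      using d_dvd_D[OF j] by (metis dvd_mult2 dvd_mult_div_cancel mult.commute of_nat_mult)
    ultimately show ?thesis
      using j by (simp add: A_coord_def lookup_c_vec lookup_single)
  qed
  then show ?thesis
    using i by (simp add: cfg_exp_A_eq_iff single_in_exponents c_vec_in_exponents)
qed

definition shift_pair :: "nat \<Rightarrow> nat \<Rightarrow> (nat \<Rightarrow>\<^sub>0 nat) \<Rightarrow> (nat \<Rightarrow>\<^sub>0 nat) \<Rightarrow> bool" where
  "shift_pair k g p q \<longleftrightarrow> p \<in> exponents (n + r) \<and> q \<in> exponents (n + r) \<and>
     cfg_exp A p = cfg_exp A q \<and> lookup p k = lookup q k + g"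

lemma shift_pair_reduce:
  assumes pq: "shift_pair k h p q" and w: "shift_pair k g wp wm"
  shows "shift_pair k (h mod g) (p + scale_exp (h div g) wm) (q + scale_exp (h div g) wp)"
proof -
  have "lookup (p + scale_exp (h div g) wm) k = lookup (q + scale_exp (h div g) wp) k + h mod g"
    using pq w unfolding shift_pair_def by (simp add: lookup_add lookup_scale_exp algebra_simps)
  moreover have "cfg_exp A (p + scale_exp (h div g) wm) = cfg_exp A (q + scale_exp (h div g) wp)"
    using pq cfg_exp_scale_exp_eq[of A wp wm "h div g"] w
    unfolding shift_pair_def by (simp add: cfg_exp_add)
  ultimately show ?thesis
    using pq w unfolding shift_pair_def by (simp add: exponents_add scale_exp_in_exponents)
qed

end

subsection \<open>Saturation by the product of the \<open>x\<close>-variables\<close>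

locale saturation = simplicial +
  fixes J :: "'a::field mpoly set"
  assumes ideal_J: "ideal_in (poly_ring TYPE('a) (n + r)) J"
    and y_pow_binomial_in_J: "\<And>i. i < r \<Longrightarrow> monom (single (n + i) D) - monom (c_vec i) \<in> J"
begin

abbreviation P :: "'a mpoly set" where
  "P \<equiv> poly_ring TYPE('a) (n + r)"

abbreviation x_prod :: "'a mpoly" where
  "x_prod \<equiv> monom (x_diag 1)"

text \<open>\<open>sat_equiv u v\<close> says that \<open>x\<^sup>u - x\<^sup>v\<close> lies in the saturation \<open>J : x_prod\<^sup>\<infinity>\<close>.\<close>

definition sat_equiv :: "(nat \<Rightarrow>\<^sub>0 nat) \<Rightarrow> (nat \<Rightarrow>\<^sub>0 nat) \<Rightarrow> bool" where
  "sat_equiv u v \<longleftrightarrow> u \<in> exponents (n + r) \<and> v \<in> exponents (n + r) \<and>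
     (\<exists>s. monom (x_diag s + u) - monom (x_diag s + v) \<in> J)"

lemma binomial_shift_in_J:
  "c \<in> exponents (n + r) \<Longrightarrow> monom p - monom q \<in> J \<Longrightarrow> monom (c + p) - monom (c + q) \<in> J"
  by (metis ideal_in_mult_left[OF ideal_J] monom_in_poly_ring monom_mult_binomial)

lemma sat_equiv_if_binomial:
  "u \<in> exponents (n + r) \<Longrightarrow> v \<in> exponents (n + r) \<Longrightarrow> monom u - monom v \<in> J \<Longrightarrow> sat_equiv u v"
  unfolding sat_equiv_def by (intro conjI exI[of _ 0]) auto

lemma sat_equiv_refl: "u \<in> exponents (n + r) \<Longrightarrow> sat_equiv u u"
  by (simp add: sat_equiv_if_binomial ideal_in_zero[OF ideal_J])

lemma sat_equiv_sym: "sat_equiv u v \<Longrightarrow> sat_equiv v u"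
  unfolding sat_equiv_def
  by (metis minus_diff_eq ideal_in_uminus[OF subring_poly_ring ideal_J])

lemma sat_equiv_trans:
  assumes "sat_equiv u v" "sat_equiv v w"
  shows "sat_equiv u w"
proof -
  obtain s t where u: "u \<in> exponents (n + r)" and w: "w \<in> exponents (n + r)"
    and s: "monom (x_diag s + u) - monom (x_diag s + v) \<in> J"
    and t: "monom (x_diag t + v) - monom (x_diag t + w) \<in> J"
    using assms unfolding sat_equiv_def by blast
  have "monom (x_diag t + (x_diag s + u)) - monom (x_diag t + (x_diag s + v))
      + (monom (x_diag s + (x_diag t + v)) - monom (x_diag s + (x_diag t + w))) \<in> J"
    using binomial_shift_in_J[OF x_diag_in_exponents s] binomial_shift_in_J[OF x_diag_in_exponents t]
    by (rule ideal_in_add[OF ideal_J])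
  then have "monom (x_diag (s + t) + u) - monom (x_diag (s + t) + w) \<in> J"
    by (simp add: x_diag_add add_ac)
  with u w show ?thesis
    unfolding sat_equiv_def by blast
qed

lemma sat_equiv_add:
  assumes "sat_equiv u v" "w \<in> exponents (n + r)"
  shows "sat_equiv (u + w) (v + w)"
proof -
  obtain s where uv: "u \<in> exponents (n + r)" "v \<in> exponents (n + r)"
    and s: "monom (x_diag s + u) - monom (x_diag s + v) \<in> J"
    using assms unfolding sat_equiv_def by blast
  have "monom (w + (x_diag s + u)) - monom (w + (x_diag s + v)) \<in> J"
    by (rule binomial_shift_in_J[OF assms(2) s])
  then have "monom (x_diag s + (u + w)) - monom (x_diag s + (v + w)) \<in> J"
    by (simp add: add_ac)
  with uv assms(2) show ?thesis
    unfolding sat_equiv_def using exponents_add by blast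
qed

lemma sat_equiv_in_exponents:
  "sat_equiv u v \<Longrightarrow> u \<in> exponents (n + r)" "sat_equiv u v \<Longrightarrow> v \<in> exponents (n + r)"
  unfolding sat_equiv_def by blast+

lemma sat_equiv_add_both:
  assumes "sat_equiv u v" "sat_equiv u' v'"
  shows "sat_equiv (u + u') (v + v')"
proof -
  have "sat_equiv (u + u') (v + u')"
    using assms by (simp add: sat_equiv_add sat_equiv_in_exponents)
  moreover have "sat_equiv (u' + v) (v' + v)"
    using assms by (simp add: sat_equiv_add sat_equiv_in_exponents)
  ultimately show ?thesis
    by (simp add: add.commute sat_equiv_trans)
qed

lemma sat_equiv_scale_exp: "sat_equiv u v \<Longrightarrow> sat_equiv (scale_exp t u) (scale_exp t v)"
  by (induction t)
    (simp_all add: scale_exp_Suc sat_equiv_add_both sat_equiv_refl exponents_def)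

lemma sat_equiv_cancel_x_diag:
  assumes "u \<in> exponents (n + r)" "v \<in> exponents (n + r)" "sat_equiv (u + x_diag k) (v + x_diag k)"
  shows "sat_equiv u v"
proof -
  obtain s where "monom (x_diag s + (u + x_diag k)) - monom (x_diag s + (v + x_diag k)) \<in> J"
    using assms(3) unfolding sat_equiv_def by blast
  then have "monom (x_diag (s + k) + u) - monom (x_diag (s + k) + v) \<in> J"
    by (simp add: x_diag_add add_ac)
  with assms(1,2) show ?thesis
    unfolding sat_equiv_def by blast
qed

text \<open>A monomial in the \<open>x\<close>-variables divides a power of \<open>x_prod\<close>.\<close>

lemma sat_equiv_cancel_x:
  assumes u: "u \<in> exponents (n + r)" and v: "v \<in> exponents (n + r)"
    and uv: "sat_equiv (u + c) (v + c)" and c: "\<And>j. n \<le> j \<Longrightarrow> lookup c j = 0"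
  shows "sat_equiv u v"
proof -
  define k where "k = (\<Sum>j<n. lookup c j)"
  have le: "lookup c j \<le> k" if "j < n" for j
    unfolding k_def using that by (intro member_le_sum) auto
  define c' where "c' = x_diag k - c"
  have cc': "c + c' = x_diag k"
    by (rule poly_mapping_eqI) (auto simp: c'_def lookup_add lookup_minus lookup_x_diag c le)
  have "c' \<in> exponents (n + r)"
    by (rule exponentsI) (simp add: c'_def lookup_minus lookup_x_diag)
  then have "sat_equiv (u + c + c') (v + c + c')"
    by (rule sat_equiv_add[OF uv])
  then have "sat_equiv (u + x_diag k) (v + x_diag k)"
    by (simp add: add.assoc cc')
  then show ?thesis
    by (rule sat_equiv_cancel_x_diag[OF u v])
qed

text \<open>Cancelling \<open>y\<^sub>i\<close>: multiply by \<open>y\<^sub>i\<^bsup>D-1\<^esup>\<close> and trade \<open>y\<^sub>i\<^sup>D\<close> for \<open>x\<^bsup>c_vec i\<^esup>\<close>.\<close>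

lemma sat_equiv_cancel_y:
  assumes u: "u \<in> exponents (n + r)" and v: "v \<in> exponents (n + r)" and i: "i < r"
    and uv: "sat_equiv (u + single (n + i) 1) (v + single (n + i) 1)"
  shows "sat_equiv u v"
proof -
  let ?y = "single (n + i) D"
  have y: "single (n + i) b \<in> exponents (n + r)" for b
    using i by (simp add: single_in_exponents)
  have "single (n + i) 1 + single (n + i) (D - 1) = ?y"
    using D_pos by (simp flip: single_add)
  moreover have "sat_equiv (u + single (n + i) 1 + single (n + i) (D - 1))
      (v + single (n + i) 1 + single (n + i) (D - 1))"
    by (rule sat_equiv_add[OF uv y])
  ultimately have "sat_equiv (u + ?y) (v + ?y)"
    by (simp only: add.assoc)
  moreover have yc: "sat_equiv ?y (c_vec i)"
    by (rule sat_equiv_if_binomial[OF y c_vec_in_exponents y_pow_binomial_in_J[OF i]])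
  have "sat_equiv (?y + w) (c_vec i + w)" if "w \<in> exponents (n + r)" for w
    by (rule sat_equiv_add[OF yc that])
  then have "sat_equiv (u + ?y) (u + c_vec i)" "sat_equiv (v + ?y) (v + c_vec i)"
    using u v by (simp_all add: add.commute)
  ultimately have "sat_equiv (u + c_vec i) (v + c_vec i)"
    by (meson sat_equiv_sym sat_equiv_trans)
  then show ?thesis
    by (rule sat_equiv_cancel_x[OF u v]) (simp add: lookup_c_vec)
qed

lemma sat_equiv_cancel_single:
  assumes u: "u \<in> exponents (n + r)" and v: "v \<in> exponents (n + r)" and k: "k < n + r"
    and uv: "sat_equiv (u + single k b) (v + single k b)"
  shows "sat_equiv u v"
  using uv
proof (induction b)
  case (Suc b)
  have k_exp: "single k b \<in> exponents (n + r)" for b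
    by (rule single_in_exponents[OF k])
  have uv': "sat_equiv (u + single k b + single k 1) (v + single k b + single k 1)"
    using Suc.prems by (simp add: add.assoc flip: single_add)
  then have "sat_equiv (u + single k b) (v + single k b)"
  proof (cases "k < n")
    case True
    show ?thesis
      by (rule sat_equiv_cancel_x[OF exponents_add[OF u k_exp] exponents_add[OF v k_exp] uv'])
        (use True in \<open>simp add: lookup_single\<close>)
  next
    case False
    then obtain i where "i < r" "k = n + i"
      using k by (metis add_diff_inverse_nat add_less_cancel_left)
    then show ?thesis
      using sat_equiv_cancel_y[OF exponents_add[OF u k_exp] exponents_add[OF v k_exp]] uv' by simp
  qed
  then show ?case
    by (rule Suc.IH)
qed simp

lemma sat_equiv_cancel:
  assumes u: "u \<in> exponents (n + r)" and v: "v \<in> exponents (n + r)" and w: "w \<in> exponents (n + r)"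
    and uv: "sat_equiv (u + w) (v + w)"
  shows "sat_equiv u v"
proof -
  have "sat_equiv (u + (\<Sum>k\<in>K. single k (lookup w k))) (v + (\<Sum>k\<in>K. single k (lookup w k)))
      \<Longrightarrow> sat_equiv u v" if "K \<subseteq> {..<n + r}" for K
    using finite_subset[OF that finite_lessThan] that
  proof (induction K rule: finite_induct)
    case (insert k K)
    let ?s = "\<Sum>k\<in>K. single k (lookup w k)"
    have s_exp: "?s \<in> exponents (n + r)"
      using insert.prems
      by (intro exponentsI) (auto simp: lookup_sum lookup_single when_def intro!: sum.neutral)
    have "sat_equiv (u + ?s + single k (lookup w k)) (v + ?s + single k (lookup w k))"
      using insert.prems insert.hyps by (simp add: ac_simps)
    then have "sat_equiv (u + ?s) (v + ?s)"
      using insert.prems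
      by (intro sat_equiv_cancel_single[OF exponents_add[OF u s_exp] exponents_add[OF v s_exp]]) auto
    then show ?case
      using insert.IH insert.prems by blast
  qed simp
  moreover have "keys w \<subseteq> {..<n + r}"
    using w by (simp add: exponents_def)
  ultimately show ?thesis
    using uv by (simp add: sum_single_lookup)
qed

lemma monom_x_diag: "monom (x_diag s) = x_prod ^ s"
proof (induction s)
  case (Suc s)
  have "x_diag (Suc s) = x_diag 1 + x_diag s"
    using x_diag_add[of 1 s] by simp
  with Suc show ?case
    by (simp add: monom_add)
qed (simp flip: single_one)

lemma sat_equiv_saturated:
  assumes "sat_equiv u v"
  obtains s where "x_prod ^ s * (monom u - monom v) \<in> J"
  using assms unfolding sat_equiv_def by (metis monom_mult_binomial monom_x_diag)

abbreviation J_plus_x_prod :: "'a mpoly set" where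
  "J_plus_x_prod \<equiv> ideal_plus_principal P J x_prod"

lemma monom_in_J_plus_x_prod:
  assumes u: "u \<in> exponents (n + r)" and x: "\<And>j. j < n \<Longrightarrow> 1 \<le> lookup u j"
  shows "monom u \<in> J_plus_x_prod"
proof -
  define u' where "u' = u - x_diag 1"
  have "u = x_diag 1 + u'"
    by (rule poly_mapping_eqI) (use x in \<open>auto simp: u'_def lookup_add lookup_minus lookup_x_diag\<close>)
  then have "monom u = 0 + x_prod * monom u'"
    by (simp add: monom_add)
  moreover have "u' \<in> exponents (n + r)"
    by (rule exponentsI) (simp add: u'_def lookup_minus exponentsD[OF u])
  ultimately show ?thesis
    unfolding ideal_plus_principal_iff using ideal_in_zero[OF ideal_J] monom_in_poly_ring by blast
qed

text \<open>Modulo \<open>J + (x_prod)\<close>, \<open>y\<^sub>i\<^sup>D \<equiv> x\<^bsup>c_vec i\<^esup> \<equiv> 0\<close> because every entry of \<open>c_vec i\<close> is positive.\<close>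

lemma monom_in_radical_J_plus_x_prod_if_y:
  assumes u: "u \<in> exponents (n + r)" and i: "i < r" "0 < lookup u (n + i)"
  shows "monom u \<in> radical_in P J_plus_x_prod"
proof -
  define u' where "u' = u - single (n + i) 1"
  have "u = single (n + i) 1 + u'"
    by (rule poly_mapping_eqI) (use i in \<open>auto simp: u'_def lookup_add lookup_minus lookup_single when_def\<close>)
  then have "scale_exp D u = single (n + i) D + scale_exp D u'"
    by (simp add: scale_exp_add scale_exp_single)
  then have "monom u ^ D = monom (single (n + i) D) * monom (scale_exp D u')"
    by (simp add: monom_power monom_add)
  moreover define c' where "c' = c_vec i - x_diag 1"
  have "c_vec i = x_diag 1 + c'"
    by (rule poly_mapping_eqI)
      (use lookup_c_vec_pos[OF i(1)] in \<open>auto simp: c'_def lookup_add lookup_minus lookup_x_diag lookup_c_vec\<close>)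
  ultimately have "monom u ^ D = (monom (single (n + i) D) - monom (c_vec i)) * monom (scale_exp D u')
      + x_prod * (monom c' * monom (scale_exp D u'))"
    by (simp add: monom_add algebra_simps)
  moreover have "u' \<in> exponents (n + r)" "c' \<in> exponents (n + r)"
    by (auto intro!: exponentsI simp: u'_def c'_def lookup_minus lookup_c_vec exponentsD[OF u])
  then have "monom (scale_exp D u') \<in> P" "monom c' * monom (scale_exp D u') \<in> P"
    by (simp_all add: monom_in_poly_ring scale_exp_in_exponents subring_mult[OF subring_poly_ring])
  ultimately have "monom u ^ D \<in> J_plus_x_prod"
    unfolding ideal_plus_principal_iff using ideal_in_mult_right[OF ideal_J y_pow_binomial_in_J[OF i(1)]]
    by blast
  then show ?thesis
    unfolding radical_in_def using monom_in_poly_ring[OF u] by blast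
qed

lemma monom_in_radical_J_plus_x_prod:
  assumes u: "u \<in> exponents (n + r)" and v: "v \<in> exponents (n + r)"
    and uv: "cfg_exp A u = cfg_exp A v" "\<not> (y_free u \<and> y_free v)"
  shows "monom u \<in> radical_in P J_plus_x_prod"
proof (cases "y_free u")
  case True
  then obtain i where i: "i < r" "0 < lookup v (n + i)"
    using uv(2) by (auto simp: y_free_def)
  have "monom u \<in> J_plus_x_prod"
    by (rule monom_in_J_plus_x_prod[OF u lookup_x_pos_if_y_free[OF u v True i uv(1)]])
  then show ?thesis
    unfolding radical_in_def using monom_in_poly_ring[OF u] by (intro CollectI conjI exI[of _ 1]) auto
next
  case False
  then show ?thesis
    using monom_in_radical_J_plus_x_prod_if_y[OF u] by (auto simp: y_free_def)
qed

lemma binomial_in_radical_J: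
  assumes u: "u \<in> exponents (n + r)" and v: "v \<in> exponents (n + r)"
    and uv: "cfg_exp A u = cfg_exp A v" "sat_equiv u v"
  shows "monom u - monom v \<in> radical_in P J"
proof (cases "y_free u \<and> y_free v")
  case True
  then show ?thesis
    using y_free_eq[OF u v _ _ uv(1)] ideal_in_zero[OF ideal_in_radical_in[OF subring_poly_ring ideal_J]]
    by simp
next
  case False
  have ideal: "ideal_in P J_plus_x_prod"
    by (intro ideal_in_ideal_plus_principal subring_poly_ring ideal_J monom_in_poly_ring x_diag_in_exponents)
  have "monom u - monom v \<in> radical_in P J_plus_x_prod"
    using False uv(1) monom_in_radical_J_plus_x_prod[OF u v] monom_in_radical_J_plus_x_prod[OF v u]
    by (intro ideal_in_diff[OF subring_poly_ring ideal_in_radical_in[OF subring_poly_ring ideal]]) auto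
  moreover obtain s where "x_prod ^ s * (monom u - monom v) \<in> J"
    using sat_equiv_saturated[OF uv(2)] .
  ultimately show ?thesis
    by (rule radical_in_if_saturated[OF subring_poly_ring ideal_J monom_in_poly_ring[OF x_diag_in_exponents]])
qed

lemma toric_ideal_eq_radical:
  assumes J_sub: "J \<subseteq> toric_ideal TYPE('a) (n + r) A"
    and sat: "\<And>u v. u \<in> exponents (n + r) \<Longrightarrow> v \<in> exponents (n + r) \<Longrightarrow>
      cfg_exp A u = cfg_exp A v \<Longrightarrow> sat_equiv u v"
  shows "toric_ideal TYPE('a) (n + r) A = rad TYPE('a) (n + r) J"
proof
  show "toric_ideal TYPE('a) (n + r) A \<subseteq> rad TYPE('a) (n + r) J"
    unfolding rad_def radical_in_def[symmetric]
  proof (rule toric_ideal_subset_if_binomials[OF ideal_in_radical_in[OF subring_poly_ring ideal_J]])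
    fix u v assume "u \<in> exponents (n + r)" "v \<in> exponents (n + r)" "cfg_exp A u = cfg_exp A v"
    then show "monom u - monom v \<in> radical_in P J"
      using binomial_in_radical_J sat by blast
  qed
next
  show "rad TYPE('a) (n + r) J \<subseteq> toric_ideal TYPE('a) (n + r) A"
    unfolding rad_def using J_sub toric_ideal_radical by blast
qed

text \<open>The lattice argument: the \<open>k\<close>-shifts between exponents with equal image are multiples of
  the minimal shift \<open>g\<close>, so adding multiples of \<open>(wm, wp)\<close> reduces every pair to one without
  shift.\<close>

lemma sat_equiv_if_shift_pair:
  assumes no_shift: "\<And>p q. shift_pair k 0 p q \<Longrightarrow> monom p - monom q \<in> J"
    and g: "0 < g" "shift_pair k g wp wm" "monom wp - monom wm \<in> J"
    and minimal: "\<And>g' p q. shift_pair k g' p q \<Longrightarrow> 0 < g' \<Longrightarrow> g \<le> g'"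
    and pq: "shift_pair k h p q"
  shows "sat_equiv p q"
proof -
  define t where "t = h div g"
  have shift: "shift_pair k (h mod g) (p + scale_exp t wm) (q + scale_exp t wp)"
    unfolding t_def by (rule shift_pair_reduce[OF pq g(2)])
  have "h mod g = 0"
  proof (rule ccontr)
    assume "h mod g \<noteq> 0"
    then have "g \<le> h mod g"
      using minimal[OF shift] by simp
    with mod_less_divisor[OF g(1), of h] show False
      by simp
  qed
  with shift have "sat_equiv (p + scale_exp t wm) (q + scale_exp t wp)"
    using no_shift sat_equiv_if_binomial unfolding shift_pair_def by simp
  moreover have w: "wp \<in> exponents (n + r)" "wm \<in> exponents (n + r)"
    using g(2) by (simp_all add: shift_pair_def)
  then have "sat_equiv (scale_exp t wp) (scale_exp t wm)"
    by (intro sat_equiv_scale_exp sat_equiv_if_binomial g(3))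
  then have "sat_equiv (scale_exp t wp + q) (scale_exp t wm + q)"
    by (rule sat_equiv_add) (use pq in \<open>simp add: shift_pair_def\<close>)
  then have "sat_equiv (q + scale_exp t wp) (q + scale_exp t wm)"
    by (simp add: add.commute)
  ultimately have "sat_equiv (p + scale_exp t wm) (q + scale_exp t wm)"
    by (rule sat_equiv_trans)
  with pq w show ?thesis
    unfolding shift_pair_def using sat_equiv_cancel scale_exp_in_exponents by blast
qed

lemma sat_equiv_if_minimal_shift:
  assumes no_shift: "\<And>p q. shift_pair k 0 p q \<Longrightarrow> monom p - monom q \<in> J"
    and g: "0 < g" "shift_pair k g wp wm" "monom wp - monom wm \<in> J"
    and minimal: "\<And>g' p q. shift_pair k g' p q \<Longrightarrow> 0 < g' \<Longrightarrow> g \<le> g'"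
    and u: "u \<in> exponents (n + r)" and v: "v \<in> exponents (n + r)" and uv: "cfg_exp A u = cfg_exp A v"
  shows "sat_equiv u v"
proof (cases "lookup v k \<le> lookup u k")
  case True
  then have "shift_pair k (lookup u k - lookup v k) u v"
    using u v uv by (simp add: shift_pair_def)
  then show ?thesis
    using sat_equiv_if_shift_pair[of k g wp wm] no_shift g minimal by blast
next
  case False
  then have "shift_pair k (lookup v k - lookup u k) v u"
    using u v uv by (simp add: shift_pair_def)
  then have "sat_equiv v u"
    using sat_equiv_if_shift_pair[of k g wp wm] no_shift g minimal by blast
  then show ?thesis
    by (rule sat_equiv_sym)
qed

end

subsection \<open>Splitting \<open>I\<^sub>A\<close>\<close>

lemma exists_nonzero_orthogonal: "\<exists>l0 l1 :: int. (l0 \<noteq> 0 \<or> l1 \<noteq> 0) \<and> l0 * x + l1 * y = 0"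
proof (cases "x = 0 \<and> y = 0")
  case True
  then show ?thesis
    by (intro exI[of _ 1] exI[of _ 0]) simp
next
  case False
  then show ?thesis
    by (intro exI[of _ y] exI[of _ "- x"]) (auto simp: algebra_simps)
qed

context simplicial
begin

lemma minimal_shift_exists:
  assumes "i < r"
  obtains g wp wm where "0 < g" "shift_pair (n + i) g wp wm"
    "\<And>g' p q. shift_pair (n + i) g' p q \<Longrightarrow> 0 < g' \<Longrightarrow> g \<le> g'"
proof -
  define Q where "Q g \<longleftrightarrow> 0 < g \<and> (\<exists>p q. shift_pair (n + i) g p q)" for g
  have "shift_pair (n + i) D (single (n + i) D) (c_vec i)"
    using assms by (simp add: shift_pair_def single_in_exponents c_vec_in_exponents cfg_exp_y_pow
        lookup_c_vec)
  then have "Q D"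
    unfolding Q_def using D_pos by blast
  then have "Q (LEAST g. Q g)"
    by (rule LeastI)
  moreover have "(LEAST g. Q g) \<le> g'" if "shift_pair (n + i) g' p q" "0 < g'" for g' p q
    using that by (intro Least_le) (auto simp: Q_def)
  ultimately show ?thesis
    using that unfolding Q_def by blast
qed

lemma y_pow_binomial_in_with_row:
  assumes "i < r" "row_val l (single (n + i) D) = row_val l (c_vec i)"
  shows "monom (single (n + i) D) - monom (c_vec i) \<in> toric_ideal TYPE('a::field) (n + r) (with_row A n l)"
  using assms
  by (intro binomial_in_toric_ideal_with_row lookup_A_ge single_in_exponents c_vec_in_exponents
      cfg_exp_y_pow) simp_all

lemma y_pow_binomial_in_coord_row:
  assumes "i < r" "n \<le> k" "n + i \<noteq> k"
  shows "monom (single (n + i) D) - monom (c_vec i)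
    \<in> toric_ideal TYPE('a::field) (n + r) (with_row A n (coord_row k))"
  using assms
  by (intro y_pow_binomial_in_with_row) (simp_all add: row_val_coord_row lookup_c_vec lookup_single)

lemma toric_ideal_with_row_neq_y_pow:
  assumes "i < r" "row_val l (single (n + i) D) \<noteq> row_val l (c_vec i)"
  shows "toric_ideal TYPE('a::field) (n + r) (with_row A n l) \<noteq> toric_ideal TYPE('a) (n + r) A"
  using assms
  by (intro toric_ideal_with_row_neq[OF lookup_A_ge single_in_exponents c_vec_in_exponents cfg_exp_y_pow])
    simp_all

text \<open>\<open>I1\<close> contains the binomials without \<open>k\<close>-shift and the generators
  \<open>y\<^sub>i\<^sup>D - x\<^bsup>c_vec i\<^esup>\<close> with \<open>n + i \<noteq> k\<close>; \<open>I2\<close> must contain the remaining generator and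
  \<open>x\<^bsup>wp\<^esup> - x\<^bsup>wm\<^esup>\<close>.\<close>

lemma toric_ideal_eq_radical_sum_with_rows:
  fixes l :: "nat \<Rightarrow> int" and k :: nat
  defines "I1 \<equiv> toric_ideal TYPE('a::field) (n + r) (with_row A n (coord_row k))"
    and "I2 \<equiv> toric_ideal TYPE('a) (n + r) (with_row A n l)"
  assumes k: "n \<le> k"
    and g: "0 < g" "shift_pair k g wp wm"
    and minimal: "\<And>g' p q. shift_pair k g' p q \<Longrightarrow> 0 < g' \<Longrightarrow> g \<le> g'"
    and l_w: "row_val l wp = row_val l wm"
    and l_y: "\<And>i. i < r \<Longrightarrow> n + i = k \<Longrightarrow> row_val l (single (n + i) D) = row_val l (c_vec i)"
  shows "toric_ideal TYPE('a) (n + r) A = rad TYPE('a) (n + r) (ideal_sum I1 I2)"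
proof -
  let ?J = "ideal_sum I1 I2"
  have I: "ideal_in (poly_ring TYPE('a) (n + r)) I1" "ideal_in (poly_ring TYPE('a) (n + r)) I2"
    unfolding I1_def I2_def by (simp_all add: ideal_in_toric_ideal)
  then have J: "ideal_in (poly_ring TYPE('a) (n + r)) ?J"
    by (intro ideal_in_ideal_sum subring_poly_ring)
  have I1_J: "I1 \<subseteq> ?J" and I2_J: "I2 \<subseteq> ?J"
    by (rule subset_ideal_sum_left[OF I(2)], rule subset_ideal_sum_right[OF I(1)])
  have J_sub: "?J \<subseteq> toric_ideal TYPE('a) (n + r) A"
    unfolding I1_def I2_def
    by (intro ideal_sum_subset[OF ideal_in_toric_ideal] toric_ideal_with_row_subset lookup_A_ge) simp_all
  have "monom (single (n + i) D) - monom (c_vec i) \<in> ?J" if "i < r" for i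
    using y_pow_binomial_in_coord_row[OF that k] y_pow_binomial_in_with_row[OF that l_y[OF that]]
      I1_J I2_J unfolding I1_def I2_def by (cases "n + i = k") auto
  with J interpret saturation n r d a ?J
    by unfold_locales simp_all
  have no_shift: "monom p - monom q \<in> ?J" if "shift_pair k 0 p q" for p q
    using that I1_J unfolding I1_def shift_pair_def
    by (auto intro!: binomial_in_toric_ideal_with_row[OF lookup_A_ge] simp: row_val_coord_row)
  have w_J: "monom wp - monom wm \<in> ?J"
    using g(2) l_w I2_J unfolding I2_def shift_pair_def
    by (auto intro!: binomial_in_toric_ideal_with_row[OF lookup_A_ge])
  have "sat_equiv u v"
    if "u \<in> exponents (n + r)" "v \<in> exponents (n + r)" "cfg_exp A u = cfg_exp A v" for u v
    by (rule sat_equiv_if_minimal_shift[OF no_shift g w_J minimal that])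
  then show ?thesis
    by (rule toric_ideal_eq_radical[OF J_sub])
qed

lemma radical_splittable_A:
  assumes n: "0 < n" and r: "3 \<le> r"
  shows "radical_splittable TYPE('a::field) (n + r) A"
proof -
  define k where "k = n + (r - 1)"
  obtain g wp wm where g: "0 < g" "shift_pair k g wp wm"
    and minimal: "\<And>g' p q. shift_pair k g' p q \<Longrightarrow> 0 < g' \<Longrightarrow> g \<le> g'"
    using minimal_shift_exists[of "r - 1", folded k_def] r by auto
  obtain l0 l1 :: int where l_nz: "l0 \<noteq> 0 \<or> l1 \<noteq> 0" and orth:
    "l0 * (int (lookup wp n) - int (lookup wm n)) + l1 * (int (lookup wp (n + 1)) - int (lookup wm (n + 1))) = 0"
    using exists_nonzero_orthogonal by blast
  define l_pair where "l_pair = (\<lambda>j. (if j = n then l0 else 0) + (if j = n + 1 then l1 else 0))"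
  have row_pair: "row_val l_pair u = l0 * int (lookup u n) + l1 * int (lookup u (n + 1))" for u
    unfolding l_pair_def by (simp add: row_val_plus row_val_point)
  have "toric_ideal TYPE('a) (n + r) A
      = rad TYPE('a) (n + r) (ideal_sum (toric_ideal TYPE('a) (n + r) (with_row A n (coord_row k)))
          (toric_ideal TYPE('a) (n + r) (with_row A n l_pair)))"
    by (rule toric_ideal_eq_radical_sum_with_rows[OF _ g minimal])
      (use orth r in \<open>auto simp: k_def row_pair lookup_single when_def lookup_c_vec algebra_simps\<close>)
  moreover have "toric_ideal TYPE('a) (n + r) (with_row A n (coord_row k)) \<noteq> toric_ideal TYPE('a) (n + r) A"
    using r D_pos unfolding k_def
    by (intro toric_ideal_with_row_neq_y_pow[of "r - 1"]) (simp_all add: row_val_coord_row lookup_c_vec)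
  moreover obtain i :: nat where i: "i < 2" "(if i = 0 then l0 else l1) \<noteq> 0"
    using l_nz that[of 0] that[of 1] by force
  then have "toric_ideal TYPE('a) (n + r) (with_row A n l_pair) \<noteq> toric_ideal TYPE('a) (n + r) A"
    using r D_pos by (intro toric_ideal_with_row_neq_y_pow[of i])
      (auto simp: row_pair lookup_single when_def lookup_c_vec split: if_splits)
  ultimately show ?thesis
    unfolding radical_splittable_def
    using pointed_config_with_row[OF pointed_config_A[OF n] lookup_A_ge] by blast
qed

end

theorem proposition2p8:
  fixes n r :: nat and d :: "nat \<Rightarrow> nat" and a :: "nat \<Rightarrow> nat \<Rightarrow> nat"
  assumes "n \<ge> 1" and "r \<ge> 3"
    and "\<forall>j<n. d j > 0"
    and "\<forall>i<r. \<forall>j<n. a i j > 0"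
  shows "radical_splittable TYPE('a::field) (n + r) (simplicial_config n r d a)"
proof -
  interpret simplicial n r d a
    using assms(3,4) by unfold_locales auto
  show ?thesis
    using assms(1,2) by (intro radical_splittable_A) auto
qed

end
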